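(* Let $(\mathfrak g,[\cdot,\cdot]_{\mathfrak g},E)$ be an ENL algebra. Then there exists a pre-ENL algebra $(\mathfrak g,\{\cdot,\cdot\},E)$ whose sub-adjacent ENL algebra is $(\mathfrak g,[\cdot,\cdot]_{\mathfrak g},E)$ (i.e. $\{x,y\}-\{y,x\}=[x,y]_{\mathfrak g}$) if and only if there exist an ENE-representation $(W;T,\rho)$ of $(\mathfrak g,[\cdot,\cdot]_{\mathfrak g},E)$ and an invertible ENE-relative Rota–Baxter operator $K:W\to\mathfrak g$ with respect to $(W;T,\rho)$. In this case, the product $\{x,y\}_K:=K(\rho(x)K^{-1}y)$ makes $(\mathfrak g,\{\cdot,\cdot\}_K,E)$ a pre-ENL algebra.
   Context: Vector spaces are finite-dimensional over an algebraically closed field of characteristic zero. An ENL algebra is a Lie algebra with linear $E$ satisfying $E[x,y]=[x,Ey]$ for all $x,y$. An ENE-representation $(W;T,\rho)$ of $(\mathfrak g,E)$ is a representation $\rho:\mathfrak g\to\mathfrak{gl}(W)$ with linear $T$ such that $T(\rho(x)u)=\rho(Ex)u=\rho(x)(Tu)$. An ENE-relative Rota–Baxter operator is a linear $K:W\to\mathfrak g$ with $[Ku,Kv]_{\mathfrak g}=K(\rho(Ku)v-\rho(Kv)u)$ for all $u,v\in W$ and $E\circ K=K\circ T$. A pre-Lie algebra is a vector space with bilinear product $\{\cdot,\cdot\}$ satisfying $\{\{x,y\},z\}-\{x,\{y,z\}\}=\{\{y,x\},z\}-\{y,\{x,z\}\}$; a pre-ENL algebra $(\mathfrak g,\{\cdot,\cdot\},E)$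 is a pre-Lie algebra with linear $E$ such that $E\{x,y\}=\{Ex,y\}=\{x,Ey\}$ for all $x,y$; its sub-adjacent ENL algebra is $(\mathfrak g,[\cdot,\cdot],E)$ with $[x,y]=\{x,y\}-\{y,x\}$. *)

theory Defs
  imports Main "HOL-Computational_Algebra.Polynomial"
begin

definition alg_closed_field :: "'k::field itself \<Rightarrow> bool" where
  "alg_closed_field _ \<longleftrightarrow> (\<forall>p :: 'k poly. degree p > 0 \<longrightarrow> (\<exists>x. poly p x = 0))"

definition fd_vs :: "('k::field \<Rightarrow> 'v::ab_group_add \<Rightarrow> 'v) \<Rightarrow> bool" where
  "fd_vs s \<longleftrightarrow> (\<exists>B. finite_dimensional_vector_space s B)"

definition bilin :: "('k::field \<Rightarrow> 'a::ab_group_add \<Rightarrow> 'a) \<Rightarrow> ('k \<Rightarrow> 'b::ab_group_add \<Rightarrow> 'b)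
    \<Rightarrow> ('k \<Rightarrow> 'c::ab_group_add \<Rightarrow> 'c) \<Rightarrow> ('a \<Rightarrow> 'b \<Rightarrow> 'c) \<Rightarrow> bool" where
  "bilin s1 s2 s3 f \<longleftrightarrow> (\<forall>x. Vector_Spaces.linear s2 s3 (f x)) \<and> (\<forall>y. Vector_Spaces.linear s1 s3 (\<lambda>x. f x y))"

definition lie_algebra :: "('k::field \<Rightarrow> 'g::ab_group_add \<Rightarrow> 'g) \<Rightarrow> ('g \<Rightarrow> 'g \<Rightarrow> 'g) \<Rightarrow> bool" where
  "lie_algebra s br \<longleftrightarrow> vector_space s \<and> bilin s s s br \<and> (\<forall>x. br x x = 0) \<and>
     (\<forall>x y z. br x (br y z) + br y (br z x) + br z (br x y) = 0)"

definition ENL_algebra :: "('k::field \<Rightarrow> 'g::ab_group_add \<Rightarrow> 'g) \<Rightarrow> ('g \<Rightarrow> 'g \<Rightarrow> 'g) \<Rightarrow> ('g \<Rightarrow> 'g) \<Rightarrow> bool" where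
  "ENL_algebra s br E \<longleftrightarrow> lie_algebra s br \<and> Vector_Spaces.linear s s E \<and>
     (\<forall>x y. E (br x y) = br x (E y))"

definition lie_rep :: "('k::field \<Rightarrow> 'g::ab_group_add \<Rightarrow> 'g) \<Rightarrow> ('g \<Rightarrow> 'g \<Rightarrow> 'g)
    \<Rightarrow> ('k \<Rightarrow> 'w::ab_group_add \<Rightarrow> 'w) \<Rightarrow> ('g \<Rightarrow> 'w \<Rightarrow> 'w) \<Rightarrow> bool" where
  "lie_rep s br sW \<rho> \<longleftrightarrow> vector_space sW \<and> bilin s sW sW \<rho> \<and>
     (\<forall>x y u. \<rho> (br x y) u = \<rho> x (\<rho> y u) - \<rho> y (\<rho> x u))"

definition ENE_rep :: "('k::field \<Rightarrow> 'g::ab_group_add \<Rightarrow> 'g) \<Rightarrow> ('g \<Rightarrow> 'g \<Rightarrow> 'g) \<Rightarrow> ('g \<Rightarrow> 'g)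
    \<Rightarrow> ('k \<Rightarrow> 'w::ab_group_add \<Rightarrow> 'w) \<Rightarrow> ('w \<Rightarrow> 'w) \<Rightarrow> ('g \<Rightarrow> 'w \<Rightarrow> 'w) \<Rightarrow> bool" where
  "ENE_rep s br E sW T \<rho> \<longleftrightarrow> lie_rep s br sW \<rho> \<and> Vector_Spaces.linear sW sW T \<and>
     (\<forall>x u. T (\<rho> x u) = \<rho> (E x) u \<and> \<rho> (E x) u = \<rho> x (T u))"

definition ENE_RB :: "('k::field \<Rightarrow> 'g::ab_group_add \<Rightarrow> 'g) \<Rightarrow> ('g \<Rightarrow> 'g \<Rightarrow> 'g) \<Rightarrow> ('g \<Rightarrow> 'g)
    \<Rightarrow> ('k \<Rightarrow> 'w::ab_group_add \<Rightarrow> 'w) \<Rightarrow> ('w \<Rightarrow> 'w) \<Rightarrow> ('g \<Rightarrow> 'w \<Rightarrow> 'w) \<Rightarrow> ('w \<Rightarrow> 'g) \<Rightarrow> bool" where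
  "ENE_RB s br E sW T \<rho> K \<longleftrightarrow> Vector_Spaces.linear sW s K \<and>
     (\<forall>u v. br (K u) (K v) = K (\<rho> (K u) v - \<rho> (K v) u)) \<and> E \<circ> K = K \<circ> T"

definition pre_lie :: "('k::field \<Rightarrow> 'g::ab_group_add \<Rightarrow> 'g) \<Rightarrow> ('g \<Rightarrow> 'g \<Rightarrow> 'g) \<Rightarrow> bool" where
  "pre_lie s P \<longleftrightarrow> vector_space s \<and> bilin s s s P \<and>
     (\<forall>x y z. P (P x y) z - P x (P y z) = P (P y x) z - P y (P x z))"

definition pre_ENL :: "('k::field \<Rightarrow> 'g::ab_group_add \<Rightarrow> 'g) \<Rightarrow> ('g \<Rightarrow> 'g \<Rightarrow> 'g) \<Rightarrow> ('g \<Rightarrow> 'g) \<Rightarrow> bool" where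
  "pre_ENL s P E \<longleftrightarrow> pre_lie s P \<and> Vector_Spaces.linear s s E \<and>
     (\<forall>x y. E (P x y) = P (E x) y \<and> P (E x) y = P x (E y))"

definition subadjacent :: "('g::ab_group_add \<Rightarrow> 'g \<Rightarrow> 'g) \<Rightarrow> ('g \<Rightarrow> 'g \<Rightarrow> 'g) \<Rightarrow> bool" where
  "subadjacent P br \<longleftrightarrow> (\<forall>x y. P x y - P y x = br x y)"

end

theory Submission
  imports Defs
begin

text \<open>A pre-Lie product P with commutator [.,.] says precisely that left multiplication
  L x = P x is a representation of the Lie algebra on itself; the identity is then a
  relative Rota-Baxter operator for L, and the pre-ENL compatibilities of E are the ENE
  conditions for (g; E, L).  Conversely, an invertible relative Rota-Baxter operator K
  transports the action \<rho> to the product {x,y} = K (\<rho> x (inv K y)): the Rota-Baxter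
  identity at inv K x, inv K y says that its commutator is the bracket, and then the
  representation property of \<rho> is the pre-Lie identity.\<close>

lemma linear_map_diff: "Vector_Spaces.linear s1 s2 f \<Longrightarrow> f (x - y) = f x - f y"
  by (simp add: linear_iff_module_hom module_hom.diff)

lemma linear_inv_bij:
  assumes lin: "Vector_Spaces.linear s1 s2 f" and "bij f"
  shows "Vector_Spaces.linear s2 s1 (inv f)"
proof -
  have "vector_space_pair s1 s2"
    using lin by (simp add: vector_space_pair_def Vector_Spaces.linear_iff)
  then obtain g where g: "Vector_Spaces.linear s2 s1 g" "g \<circ> f = id"
    using vector_space_pair.linear_injective_left_inverse lin \<open>bij f\<close> bij_is_inj by blast
  have "inv f = g"
  proof
    fix y
    have "f (inv f y) = y" using \<open>bij f\<close> by (simp add: bij_is_surj surj_f_inv_f)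
    then show "inv f y = g y" using g(2) by (metis comp_apply id_apply)
  qed
  then show ?thesis using g(1) by simp
qed

lemma pre_lie_left_mult_lie_rep:
  assumes pre: "pre_lie s P" and sub: "subadjacent P br"
  shows "lie_rep s br s P"
  unfolding lie_rep_def
proof (intro conjI allI)
  show "vector_space s" "bilin s s s P" using pre by (simp_all add: pre_lie_def)
  fix x y u
  have lin_left: "Vector_Spaces.linear s s (\<lambda>x. P x u)"
    using pre by (simp add: pre_lie_def bilin_def)
  have "P (br x y) u = P (P x y - P y x) u" using sub by (simp add: subadjacent_def)
  also have "\<dots> = P (P x y) u - P (P y x) u" by (rule linear_map_diff[OF lin_left])
  also have "\<dots> = P x (P y u) - P y (P x u)"
    using pre by (simp add: pre_lie_def algebra_simps)
  finally show "P (br x y) u = P x (P y u) - P y (P x u)" .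
qed

lemma pre_ENL_left_mult_ENE_rep:
  assumes "pre_ENL s P E" and "subadjacent P br"
  shows "ENE_rep s br E s E P"
  using assms pre_lie_left_mult_lie_rep unfolding ENE_rep_def pre_ENL_def by metis

lemma id_ENE_RB:
  assumes "vector_space s" and "subadjacent P br"
  shows "ENE_RB s br E s E P id"
  using assms vector_space.linear_id by (simp add: ENE_RB_def subadjacent_def)

lemma RB_product_subadjacent:
  assumes lin: "Vector_Spaces.linear sW s K" and "bij K"
    and RB: "\<And>u v. br (K u) (K v) = K (\<rho> (K u) v - \<rho> (K v) u)"
  shows "subadjacent (\<lambda>x y. K (\<rho> x (inv K y))) br"
  unfolding subadjacent_def
proof (intro allI)
  fix x y
  have K_inv: "\<And>z. K (inv K z) = z" using \<open>bij K\<close> by (simp add: bij_is_surj surj_f_inv_f)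
  show "K (\<rho> x (inv K y)) - K (\<rho> y (inv K x)) = br x y"
    using RB[of "inv K x" "inv K y"] by (simp add: K_inv linear_map_diff[OF lin])
qed

lemma RB_product_pre_lie:
  assumes rep: "lie_rep s br sW \<rho>" and lin: "Vector_Spaces.linear sW s K" and "bij K"
    and RB: "\<And>u v. br (K u) (K v) = K (\<rho> (K u) v - \<rho> (K v) u)"
  shows "pre_lie s (\<lambda>x y. K (\<rho> x (inv K y)))" (is "pre_lie s ?P")
  unfolding pre_lie_def
proof (intro conjI allI)
  have lin_inv: "Vector_Spaces.linear s sW (inv K)" using linear_inv_bij lin \<open>bij K\<close> .
  have lin_right: "\<And>x. Vector_Spaces.linear sW sW (\<rho> x)"
    and lin_left: "\<And>u. Vector_Spaces.linear s sW (\<lambda>x. \<rho> x u)"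
    using rep by (simp_all add: lie_rep_def bilin_def)
  show "vector_space s" using lin by (simp add: Vector_Spaces.linear_iff)
  show "bilin s s s ?P"
    unfolding bilin_def
    using Vector_Spaces.linear_compose[OF Vector_Spaces.linear_compose[OF lin_inv lin_right] lin]
      Vector_Spaces.linear_compose[OF lin_left lin]
    by (simp add: o_def)
  fix x y z
  from lin \<open>bij K\<close> RB have "subadjacent ?P br" by (rule RB_product_subadjacent)
  then have sub: "?P x y - ?P y x = br x y" by (simp add: subadjacent_def)
  have "?P (?P x y) z - ?P (?P y x) z = K (\<rho> (br x y) (inv K z))"
    by (simp add: linear_map_diff[OF lin] linear_map_diff[OF lin_left] flip: sub)
  also have "\<dots> = ?P x (?P y z) - ?P y (?P x z)"
    using rep \<open>bij K\<close> by (simp add: lie_rep_def bij_is_inj linear_map_diff[OF lin])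
  finally show "?P (?P x y) z - ?P x (?P y z) = ?P (?P y x) z - ?P y (?P x z)"
    by (simp add: algebra_simps)
qed

lemma RB_product_ENE_compat:
  assumes rep: "ENE_rep s br E sW T \<rho>" and EK: "E \<circ> K = K \<circ> T" and "bij K"
  shows "E (K (\<rho> x (inv K y))) = K (\<rho> (E x) (inv K y))
    \<and> K (\<rho> (E x) (inv K y)) = K (\<rho> x (inv K (E y)))"
proof -
  have K_inv: "\<And>z. K (inv K z) = z" and inv_K: "\<And>u. inv K (K u) = u"
    using \<open>bij K\<close> by (simp_all add: bij_is_surj surj_f_inv_f bij_is_inj)
  have "inv K (E y) = T (inv K y)"
    using fun_cong[OF EK, of "inv K y"] by (simp add: K_inv inv_K)
  then show ?thesis
    using rep fun_cong[OF EK] by (simp add: ENE_rep_def)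
qed

lemma RB_product_pre_ENL:
  assumes "Vector_Spaces.linear s s E" and rep: "ENE_rep s br E sW T \<rho>"
    and RB: "ENE_RB s br E sW T \<rho> K" and "bij K"
  shows "pre_ENL s (\<lambda>x y. K (\<rho> x (inv K y))) E \<and> subadjacent (\<lambda>x y. K (\<rho> x (inv K y))) br"
    (is "pre_ENL s ?P E \<and> _")
proof -
  have lin_K: "Vector_Spaces.linear sW s K"
    and RB_identity: "\<And>u v. br (K u) (K v) = K (\<rho> (K u) v - \<rho> (K v) u)"
    and EK: "E \<circ> K = K \<circ> T"
    using RB by (simp_all add: ENE_RB_def)
  have "lie_rep s br sW \<rho>" using rep by (simp add: ENE_rep_def)
  from this lin_K \<open>bij K\<close> RB_identity have "pre_lie s ?P" by (rule RB_product_pre_lie)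
  moreover from lin_K \<open>bij K\<close> RB_identity have "subadjacent ?P br" by (rule RB_product_subadjacent)
  moreover have "\<forall>x y. E (?P x y) = ?P (E x) y \<and> ?P (E x) y = ?P x (E y)"
    using RB_product_ENE_compat[OF rep EK \<open>bij K\<close>] by blast
  ultimately show ?thesis using \<open>Vector_Spaces.linear s s E\<close> by (simp add: pre_ENL_def)
qed

theorem proposition7p7:
  fixes s :: "'k::field_char_0 \<Rightarrow> 'g::ab_group_add \<Rightarrow> 'g"
    and br :: "'g \<Rightarrow> 'g \<Rightarrow> 'g" and E :: "'g \<Rightarrow> 'g"
  assumes "alg_closed_field TYPE('k)"
    and "fd_vs s"
    and "ENL_algebra s br E"
  shows "((\<exists>P. pre_ENL s P E \<and> subadjacent P br) \<longrightarrow>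
            (\<exists>(\<rho> :: 'g \<Rightarrow> 'g \<Rightarrow> 'g) T K. ENE_rep s br E s T \<rho> \<and> ENE_RB s br E s T \<rho> K \<and> bij K))
       \<and> (\<forall>(sW :: 'k \<Rightarrow> 'w::ab_group_add \<Rightarrow> 'w) T \<rho> K.
            fd_vs sW \<and> ENE_rep s br E sW T \<rho> \<and> ENE_RB s br E sW T \<rho> K \<and> bij K \<longrightarrow>
            (\<exists>P. pre_ENL s P E \<and> subadjacent P br))
       \<and> (\<forall>(sW :: 'k \<Rightarrow> 'w::ab_group_add \<Rightarrow> 'w) T \<rho> K.
            fd_vs sW \<and> ENE_rep s br E sW T \<rho> \<and> ENE_RB s br E sW T \<rho> K \<and> bij K \<longrightarrow>
            pre_ENL s (\<lambda>x y. K (\<rho> x (inv K y))) E \<and> subadjacent (\<lambda>x y. K (\<rho> x (inv K y))) br)"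
proof (intro conjI impI allI)
  assume "\<exists>P. pre_ENL s P E \<and> subadjacent P br"
  then obtain P where pre: "pre_ENL s P E" and sub: "subadjacent P br" by blast
  have "vector_space s" using pre by (simp add: pre_ENL_def pre_lie_def)
  then show "\<exists>(\<rho> :: 'g \<Rightarrow> 'g \<Rightarrow> 'g) T K. ENE_rep s br E s T \<rho> \<and> ENE_RB s br E s T \<rho> K \<and> bij K"
    using pre_ENL_left_mult_ENE_rep[OF pre sub] id_ENE_RB[OF _ sub] bij_id by blast
next
  have lin_E: "Vector_Spaces.linear s s E" using \<open>ENL_algebra s br E\<close> by (simp add: ENL_algebra_def)
  fix sW :: "'k \<Rightarrow> 'w::ab_group_add \<Rightarrow> 'w" and T \<rho> K
  assume "fd_vs sW \<and> ENE_rep s br E sW T \<rho> \<and> ENE_RB s br E sW T \<rho> K \<and> bij K"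
  then have descendent: "pre_ENL s (\<lambda>x y. K (\<rho> x (inv K y))) E
      \<and> subadjacent (\<lambda>x y. K (\<rho> x (inv K y))) br"
    using RB_product_pre_ENL[OF lin_E] by blast
  then show "\<exists>P. pre_ENL s P E \<and> subadjacent P br" by blast
  show "pre_ENL s (\<lambda>x y. K (\<rho> x (inv K y))) E" using descendent by blast
  show "subadjacent (\<lambda>x y. K (\<rho> x (inv K y))) br" using descendent by blast
qed

end
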